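(* Let $k\ge 1$. Suppose $k$ symbols $\circ$ and $k+2$ symbols $\bullet$ are placed at $2k+2$ pairwise distinct points of a circle in such a way that between any two adjacent $\circ$'s there are at most two $\bullet$'s. Then, reading the symbols around the circle in counterclockwise cyclic order, there exist consecutive symbols forming the pattern $$\bullet\,\bullet\,\underbrace{\circ\,\bullet\,\circ\,\bullet\cdots\circ\,\bullet}_{(\circ\,\bullet)^n}\,\bullet$$ for some $n\ge 1$.
   Context: Two $\circ$'s are called adjacent if, traversing the circle from one to the other in counterclockwise direction, no other $\circ$ is encountered; the condition bounds the number of $\bullet$'s encountered on each such arc. *)

theory Defs
  imports Main
begin

datatype symbol = Circ | Bullet

text \<open>An arrangement of N symbols on a circle: positions 0..N-1 in counterclockwise
order, given by a function c (only values below N matter); position p is read as c (p mod N).\<close>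

text \<open>Two circle positions i and (i+d) mod N holding Circ are adjacent if going counterclockwise
from i by d steps (1 \<le> d \<le> N) no other Circ is met; the condition says the number d-1
of Bullets met on such an arc is at most two.  (d = N covers the case of a single Circ,
which is adjacent to itself.)\<close>
definition adjacent_circs_ok :: "nat \<Rightarrow> (nat \<Rightarrow> symbol) \<Rightarrow> bool" where
  "adjacent_circs_ok N c \<longleftrightarrow>
     (\<forall>i<N. \<forall>d. c i = Circ \<and> 1 \<le> d \<and> d \<le> N \<and> c ((i + d) mod N) = Circ
        \<and> (\<forall>j. 0 < j \<and> j < d \<longrightarrow> c ((i + j) mod N) = Bullet)
        \<longrightarrow> d - 1 \<le> 2)"

definition pattern :: "nat \<Rightarrow> symbol list" where
  "pattern n = [Bullet, Bullet] @ concat (replicate n [Circ, Bullet]) @ [Bullet]"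

definition occurs_cyclically :: "nat \<Rightarrow> (nat \<Rightarrow> symbol) \<Rightarrow> symbol list \<Rightarrow> bool" where
  "occurs_cyclically N c w \<longleftrightarrow>
     length w \<le> N \<and> (\<exists>s<N. \<forall>j<length w. c ((s + j) mod N) = w ! j)"

end

theory Submission
  imports Defs
begin

text \<open>Call a position a bullet pair (circ pair) if it and its successor both hold a Bullet
(a Circ).  Around the circle the changes from Bullet to Circ are as many as those from Circ to
Bullet, so the number of bullet pairs exceeds the number of circ pairs by the surplus 2 of
Bullets over Circs.  The gap condition rules out three consecutive Bullets.  If the pattern
does not occur, the word read from a bullet pair continues Circ Bullet Circ Bullet \<dots> until two
Circs meet: a Bullet in place of a Circ would complete either the pattern or three Bullets.
Sending every bullet pair to the circ pair so reached is injective, since all even offsets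
inside such a run hold Circs, so no other bullet pair can lie on it.  Thus there are at most
as many bullet pairs as circ pairs, a contradiction.\<close>

lemma mod_add_right_cancel: "((a::nat) + m) mod N = (b + m) mod N \<Longrightarrow> a mod N = b mod N"
  by (simp add: nat_mod_eq_iff)

lemma symbol_neq_Circ_iff [simp]: "x \<noteq> Circ \<longleftrightarrow> x = Bullet"
  by (cases x) auto

lemma symbol_neq_Bullet_iff [simp]: "x \<noteq> Bullet \<longleftrightarrow> x = Circ"
  by (cases x) auto

lemma circ_within_three_steps:
  fixes f :: "nat \<Rightarrow> symbol"
  assumes next_circ: "\<And>x. f x = Circ \<Longrightarrow> \<exists>d. 1 \<le> d \<and> d \<le> 3 \<and> f (x + d) = Circ"
    and "f p = Circ"
  shows "\<exists>e. t \<le> e \<and> e \<le> t + 2 \<and> f (p + e) = Circ"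
proof (induction t)
  case 0
  show ?case using \<open>f p = Circ\<close> by (intro exI[of _ 0]) simp
next
  case (Suc t)
  then obtain e where e: "t \<le> e" "e \<le> t + 2" "f (p + e) = Circ" by blast
  show ?case
  proof (cases "e = t")
    case True
    obtain d where "1 \<le> d" "d \<le> 3" "f (p + e + d) = Circ" using next_circ[OF e(3)] by blast
    with True show ?thesis by (intro exI[of _ "e + d"]) (auto simp: add.assoc)
  next
    case False
    with e show ?thesis by (intro exI[of _ e]) auto
  qed
qed

lemma length_concat_replicate_Circ_Bullet:
  "length (concat (replicate n [Circ, Bullet])) = 2 * n"
  by (induction n) auto

lemma nth_concat_replicate_Circ_Bullet:
  "j < 2 * n \<Longrightarrow> concat (replicate n [Circ, Bullet]) ! j = (if even j then Circ else Bullet)"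
proof (induction n arbitrary: j)
  case (Suc n)
  show ?case
  proof (cases "j < 2")
    case True
    then show ?thesis by (auto simp: less_2_cases_iff)
  next
    case False
    then obtain j' where "j = j' + 2" by (metis add.commute le_add_diff_inverse not_less)
    with Suc show ?thesis by (auto simp: nth_append)
  qed
qed simp

lemma length_pattern: "length (pattern n) = 2 * n + 3"
  by (simp add: pattern_def length_concat_replicate_Circ_Bullet)

lemma nth_pattern:
  "j < 2 * n + 3 \<Longrightarrow> pattern n ! j =
     (if 2 \<le> j \<and> j < 2 * n + 2 \<and> even j then Circ else Bullet)"
  by (auto simp: pattern_def nth_append length_concat_replicate_Circ_Bullet
      nth_concat_replicate_Circ_Bullet less_2_cases_iff nth_Cons')

locale cyclic_word =
  fixes N :: nat and c :: "nat \<Rightarrow> symbol"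
  assumes N_pos: "0 < N"
begin

definition symbol_at :: "nat \<Rightarrow> symbol" where
  "symbol_at x = c (x mod N)"

lemma symbol_at_mod [simp]: "symbol_at (x mod N) = symbol_at x"
  by (simp add: symbol_at_def)

lemma symbol_at_add_period [simp]: "symbol_at (x + N) = symbol_at x"
  by (simp add: symbol_at_def)

definition positions :: "symbol \<Rightarrow> nat set" where
  "positions a = {s. s < N \<and> symbol_at s = a}"

definition pair_positions :: "symbol \<Rightarrow> symbol \<Rightarrow> nat set" where
  "pair_positions a b = {s. s < N \<and> symbol_at s = a \<and> symbol_at (Suc s) = b}"

lemma card_positions_Suc:
  "card {s. s < N \<and> symbol_at (Suc s) = a} = card (positions a)"
proof -
  let ?S = "{s. s < N \<and> symbol_at (Suc s) = a}"
  let ?rot = "\<lambda>s. Suc s mod N"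
  have "inj_on ?rot ?S"
  proof (rule inj_onI)
    fix x y assume "x \<in> ?S" "y \<in> ?S" "?rot x = ?rot y"
    then have "x mod N = y mod N" using mod_add_right_cancel[of x 1 N y] by simp
    with \<open>x \<in> ?S\<close> \<open>y \<in> ?S\<close> show "x = y" by simp
  qed
  moreover have "?rot ` ?S = positions a"
  proof
    show "?rot ` ?S \<subseteq> positions a"
      using N_pos by (auto simp: positions_def)
    show "positions a \<subseteq> ?rot ` ?S"
    proof
      fix t assume t: "t \<in> positions a"
      define s where "s = (t + N - 1) mod N"
      have "?rot s = t"
        using t N_pos by (simp add: s_def positions_def mod_Suc_eq)
      moreover have "s \<in> ?S"
        using t N_pos \<open>?rot s = t\<close> by (simp add: s_def positions_def) (metis symbol_at_mod)
      ultimately show "t \<in> ?rot ` ?S" by blast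
    qed
  qed
  ultimately show ?thesis by (metis card_image)
qed

lemma card_positions_Bullet_Circ:
  "card (positions Bullet) + card (pair_positions Circ Circ)
     = card (positions Circ) + card (pair_positions Bullet Bullet)"
proof -
  have "positions Bullet = pair_positions Bullet Bullet \<union> pair_positions Bullet Circ"
    by (auto simp: positions_def pair_positions_def)
  then have bullets: "card (positions Bullet)
      = card (pair_positions Bullet Bullet) + card (pair_positions Bullet Circ)"
    by (simp add: card_Un_disjoint pair_positions_def disjoint_iff)
  have "{s. s < N \<and> symbol_at (Suc s) = Circ}
      = pair_positions Circ Circ \<union> pair_positions Bullet Circ"
    by (auto simp: pair_positions_def)
  then have circs: "card (positions Circ)
      = card (pair_positions Circ Circ) + card (pair_positions Bullet Circ)"
    by (simp add: card_positions_Suc [symmetric] card_Un_disjoint pair_positions_def disjoint_iff)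
  from bullets circs show ?thesis by simp
qed

lemma next_circ_within_three:
  assumes "adjacent_circs_ok N c" and "symbol_at x = Circ"
  shows "\<exists>d. 1 \<le> d \<and> d \<le> 3 \<and> symbol_at (x + d) = Circ"
proof -
  define i where "i = x mod N"
  let ?circ_ahead = "\<lambda>d. 1 \<le> d \<and> c ((i + d) mod N) = Circ"
  have i: "i < N" "c i = Circ"
    using N_pos assms(2) by (simp_all add: i_def symbol_at_def)
  then have wrap: "?circ_ahead N"
    using N_pos by simp
  define d where "d = (LEAST d. ?circ_ahead d)"
  have d: "?circ_ahead d"
    unfolding d_def by (rule LeastI[of ?circ_ahead, OF wrap])
  have "d \<le> N"
    unfolding d_def by (rule Least_le) (rule wrap)
  moreover have "\<forall>j. 0 < j \<and> j < d \<longrightarrow> c ((i + j) mod N) = Bullet"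
  proof (intro allI impI)
    fix j assume "0 < j \<and> j < d"
    then show "c ((i + j) mod N) = Bullet"
      using not_less_Least[of j ?circ_ahead] by (simp add: d_def)
  qed
  ultimately have "d - 1 \<le> 2"
    using assms(1) i d unfolding adjacent_circs_ok_def by blast
  moreover have "symbol_at (x + d) = Circ"
    using d by (simp add: symbol_at_def i_def mod_add_left_eq)
  ultimately show ?thesis using d by (intro exI[of _ d]) simp
qed

lemma no_three_bullets:
  assumes "adjacent_circs_ok N c" and "symbol_at p = Circ"
  shows "symbol_at x = Circ \<or> symbol_at (x + 1) = Circ \<or> symbol_at (x + 2) = Circ"
proof -
  have "symbol_at (p mod N) = Circ" using assms(2) by simp
  then obtain e where e: "x + N - p mod N \<le> e" "e \<le> x + N - p mod N + 2"
    "symbol_at (p mod N + e) = Circ"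
    using circ_within_three_steps[of symbol_at, OF next_circ_within_three[OF assms(1)]] by blast
  define j where "j = e - (x + N - p mod N)"
  have "p mod N + e = x + j + N"
    using e(1) N_pos mod_less_divisor[of N p] unfolding j_def by linarith
  then have "symbol_at (x + j) = Circ"
    using e(3) by (metis symbol_at_add_period)
  moreover have "j = 0 \<or> j = 1 \<or> j = 2" using e(2) unfolding j_def by arith
  ultimately show ?thesis by auto
qed

definition double_circ_at :: "nat \<Rightarrow> bool" where
  "double_circ_at x \<longleftrightarrow> symbol_at x = Circ \<and> symbol_at (Suc x) = Circ"

lemma double_circ_at_mod [simp]: "double_circ_at (x mod N) = double_circ_at x"
  by (simp add: double_circ_at_def symbol_at_def mod_Suc_eq)

definition alternating :: "nat \<Rightarrow> nat \<Rightarrow> bool" where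
  "alternating s n \<longleftrightarrow>
     (\<forall>l. 1 \<le> l \<and> l \<le> n \<longrightarrow> symbol_at (s + 2 * l) = Circ \<and> symbol_at (s + 2 * l + 1) = Bullet)"

lemma occurs_cyclically_pattern:
  assumes "symbol_at s = Bullet" "symbol_at (s + 1) = Bullet" "alternating s n"
    "symbol_at (s + 2 * n + 2) = Bullet" "2 * n + 3 \<le> N"
  shows "occurs_cyclically N c (pattern n)"
proof -
  have "symbol_at (s + j) = pattern n ! j" if j: "j < 2 * n + 3" for j
  proof (cases "2 \<le> j \<and> j < 2 * n + 2")
    case True
    show ?thesis
    proof (cases "even j")
      case True
      then obtain l where "j = 2 * l" by blast
      with \<open>2 \<le> j \<and> j < 2 * n + 2\<close> assms(3) show ?thesis
        by (simp add: nth_pattern alternating_def)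
    next
      case False
      then obtain l where "j = 2 * l + 1" by (blast elim: oddE)
      with \<open>2 \<le> j \<and> j < 2 * n + 2\<close> assms(3) show ?thesis
        by (simp add: nth_pattern alternating_def)
    qed
  next
    case False
    then have "j = 0 \<or> j = 1 \<or> j = 2 * n + 2" using j by arith
    with assms(1,2,4) j show ?thesis by (auto simp: nth_pattern)
  qed
  then have "\<forall>j < length (pattern n). c ((s mod N + j) mod N) = pattern n ! j"
    by (simp add: length_pattern symbol_at_def mod_add_left_eq)
  with assms(5) N_pos show ?thesis
    unfolding occurs_cyclically_def length_pattern by (intro conjI exI[of _ "s mod N"]) auto
qed

lemma alternating_Suc:
  assumes "even N"
    and no_bbb: "\<And>x. symbol_at x = Circ \<or> symbol_at (x + 1) = Circ \<or> symbol_at (x + 2) = Circ"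
    and no_pattern: "\<not> (\<exists>n\<ge>1. occurs_cyclically N c (pattern n))"
    and bullets: "symbol_at s = Bullet" "symbol_at (s + 1) = Bullet"
    and alt: "alternating s n"
    and no_double_circ: "\<not> double_circ_at (s + 2 * n + 2)"
  shows "alternating s (Suc n)"
proof -
  have circ: "symbol_at (s + 2 * n + 2) = Circ"
  proof (rule ccontr)
    assume "symbol_at (s + 2 * n + 2) \<noteq> Circ"
    then have bullet: "symbol_at (s + 2 * n + 2) = Bullet" by simp
    have "n = 0 \<or> 1 \<le> n \<and> 2 * n + 3 \<le> N \<or> 1 \<le> n \<and> N \<le> 2 * n \<or> 1 \<le> n \<and> N = 2 * n + 2"
      using \<open>even N\<close> by presburger
    then consider "n = 0" | "1 \<le> n" "2 * n + 3 \<le> N" | "1 \<le> n" "N \<le> 2 * n" | "1 \<le> n" "N = 2 * n + 2"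
      by blast
    then show False
    proof cases
      case 1
      with no_bbb[of s] bullets bullet show False by simp
    next
      case 2
      with occurs_cyclically_pattern[OF bullets alt bullet] no_pattern show False by blast
    next
      case 3
      with \<open>even N\<close> N_pos obtain l where "N = 2 * l" "1 \<le> l" "l \<le> n" by (auto elim!: evenE)
      moreover from alt \<open>1 \<le> l\<close> \<open>l \<le> n\<close> have "symbol_at (s + 2 * l) = Circ"
        by (simp add: alternating_def)
      ultimately show False using bullets by (metis symbol_at_add_period symbol.distinct(1))
    next
      case 4
      \<comment> \<open>the run closes up: positions \<open>2n + 1\<close>, \<open>2n + 2\<close>, \<open>2n + 3 \<equiv> 1\<close> are Bullets\<close>
      have "symbol_at (s + 2 * n + 1) = Bullet"
        using alt \<open>1 \<le> n\<close> by (simp add: alternating_def)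
      moreover have "s + 2 * n + 1 + 2 = s + 1 + N"
        using \<open>N = 2 * n + 2\<close> by simp
      then have "symbol_at (s + 2 * n + 1 + 2) = Bullet"
        using bullets(2) by (metis symbol_at_add_period)
      ultimately show False
        using no_bbb[of "s + 2 * n + 1"] bullet by simp
    qed
  qed
  with no_double_circ have "symbol_at (Suc (s + 2 * n + 2)) = Bullet"
    by (simp add: double_circ_at_def)
  moreover have "s + 2 * Suc n = s + 2 * n + 2" "s + 2 * Suc n + 1 = Suc (s + 2 * n + 2)" by simp_all
  ultimately have "symbol_at (s + 2 * Suc n) = Circ \<and> symbol_at (s + 2 * Suc n + 1) = Bullet"
    using circ by metis
  with alt show ?thesis
    unfolding alternating_def by (metis le_Suc_eq)
qed

lemma double_circ_after_bullet_pair: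
  assumes "even N"
    and no_bbb: "\<And>x. symbol_at x = Circ \<or> symbol_at (x + 1) = Circ \<or> symbol_at (x + 2) = Circ"
    and no_pattern: "\<not> (\<exists>n\<ge>1. occurs_cyclically N c (pattern n))"
    and bullets: "symbol_at s = Bullet" "symbol_at (s + 1) = Bullet"
  shows "\<exists>n. alternating s n \<and> double_circ_at (s + 2 * n + 2)"
proof (rule ccontr)
  assume no_double_circ: "\<not> ?thesis"
  have alt: "alternating s n" for n
  proof (induction n)
    case 0
    show ?case by (simp add: alternating_def)
  next
    case (Suc n)
    with no_double_circ show ?case
      by (intro alternating_Suc[OF assms]) auto
  qed
  have "symbol_at (s + 2 * N) = Circ"
    using alt[of N] N_pos by (simp add: alternating_def)
  moreover have "s + 2 * N = s + N + N" by simp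
  ultimately show False
    using bullets(1) by (metis symbol_at_add_period symbol.distinct(1))
qed

lemma card_bullet_pairs_le_card_circ_pairs:
  assumes double_circ: "\<And>s. symbol_at s = Bullet \<Longrightarrow> symbol_at (s + 1) = Bullet \<Longrightarrow>
      \<exists>n. alternating s n \<and> double_circ_at (s + 2 * n + 2)"
  shows "card (pair_positions Bullet Bullet) \<le> card (pair_positions Circ Circ)"
proof -
  let ?BB = "pair_positions Bullet Bullet"
  have "\<forall>s\<in>?BB. \<exists>n. alternating s n \<and> double_circ_at (s + 2 * n + 2)"
    using double_circ by (simp add: pair_positions_def)
  then obtain run where run: "\<And>s. s \<in> ?BB \<Longrightarrow>
      alternating s (run s) \<and> double_circ_at (s + 2 * run s + 2)"
    by metis
  define target where "target s = (s + 2 * run s + 2) mod N" for s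
  have "target ` ?BB \<subseteq> pair_positions Circ Circ"
  proof
    fix x assume "x \<in> target ` ?BB"
    then obtain s where "s \<in> ?BB" "x = target s" by blast
    with run[of s] have "double_circ_at x" by (simp add: target_def)
    with \<open>x = target s\<close> N_pos show "x \<in> pair_positions Circ Circ"
      by (simp add: target_def pair_positions_def double_circ_at_def)
  qed
  moreover have "inj_on target ?BB"
  proof -
    have run_mono: False if s: "s \<in> ?BB" "t \<in> ?BB" and "run s < run t" and "target s = target t" for s t
    proof -
      define l where "l = run t - run s"
      have "(s + 2 * run s + 2) mod N = (t + 2 * l + (2 * run s + 2)) mod N"
        using \<open>target s = target t\<close> \<open>run s < run t\<close> by (simp add: target_def l_def algebra_simps)
      then have "s mod N = (t + 2 * l) mod N"
        using mod_add_right_cancel[of s "2 * run s + 2" N "t + 2 * l"] by (simp add: add.assoc)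
      moreover have "symbol_at (t + 2 * l) = Circ"
        using run[OF s(2)] \<open>run s < run t\<close> by (simp add: alternating_def l_def)
      ultimately have "symbol_at s = Circ"
        by (metis symbol_at_mod)
      with s(1) show False by (simp add: pair_positions_def)
    qed
    show ?thesis
    proof (intro inj_onI)
      fix s t assume "s \<in> ?BB" "t \<in> ?BB" "target s = target t"
      then have "\<not> run s < run t" "\<not> run t < run s"
        using run_mono[of s t] run_mono[of t s] by auto
      then have "run s = run t" by simp
      with \<open>target s = target t\<close> have "s mod N = t mod N"
        using mod_add_right_cancel[of s "2 * run s + 2" N t] by (simp add: target_def add.assoc)
      with \<open>s \<in> ?BB\<close> \<open>t \<in> ?BB\<close> show "s = t" by (simp add: pair_positions_def)
    qed
  qed
  ultimately show ?thesis
    by (intro card_inj_on_le) (auto simp: pair_positions_def)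
qed

end

theorem mainTheorem4:
  fixes k :: nat and c :: "nat \<Rightarrow> symbol"
  assumes "k \<ge> 1"
    and "card {i. i < 2*k+2 \<and> c i = Circ} = k"
    and "card {i. i < 2*k+2 \<and> c i = Bullet} = k + 2"
    and "adjacent_circs_ok (2*k+2) c"
  shows "\<exists>n\<ge>1. occurs_cyclically (2*k+2) c (pattern n)"
proof (rule ccontr)
  define N where "N = 2*k+2"
  assume "\<not> ?thesis"
  then have no_pattern: "\<not> (\<exists>n\<ge>1. occurs_cyclically N c (pattern n))"
    by (simp add: N_def)
  interpret cyclic_word N c
    by unfold_locales (simp add: N_def)
  have adjacent_ok: "adjacent_circs_ok N c"
    using assms(4) by (simp add: N_def)
  have "positions a = {i. i < N \<and> c i = a}" for a
    by (auto simp: positions_def symbol_at_def)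
  moreover have "card {i. i < N \<and> c i = Circ} = k" "card {i. i < N \<and> c i = Bullet} = k + 2"
    using assms(2,3) by (simp_all add: N_def)
  ultimately have card_circ: "card (positions Circ) = k"
    and card_bullet: "card (positions Bullet) = k + 2"
    by simp_all
  with assms(1) obtain p where "p \<in> positions Circ"
    by (metis card.empty ex_in_conv not_one_le_zero)
  then have "symbol_at p = Circ" by (simp add: positions_def)
  then have "card (pair_positions Bullet Bullet) \<le> card (pair_positions Circ Circ)"
    by (intro card_bullet_pairs_le_card_circ_pairs double_circ_after_bullet_pair
        no_three_bullets[OF adjacent_ok] no_pattern) (auto simp: N_def)
  with card_positions_Bullet_Circ card_circ card_bullet show False by simp
qed

end
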